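(* Let $G=K(n_1,\dots,n_s)$ be a complete $s$-partite graph ($s\ge 2$) with parts $V_1,\dots,V_s$, $|V_j|=n_j$. If $j\in\{1,\dots,s\}$ satisfies $n_j\ge 6$, then $\chi_3(G)=\chi_3(G-V_j)+1$.
   Context: A map $f:V(G)\to\{1,\dots,k\}$ is a $3$-relaxed $k$-coloring if every vertex $u$ has at most $3$ neighbors $v$ with $f(v)=f(u)$; $\chi_3(G)$ is the minimum $k$ for which such a coloring exists. $G-V_j$ is the graph obtained by deleting the vertices of $V_j$. *)

theory Defs
  imports Main
begin

definition relaxed_coloring ::
  "nat \<Rightarrow> 'a set \<Rightarrow> ('a \<Rightarrow> 'a \<Rightarrow> bool) \<Rightarrow> nat \<Rightarrow> ('a \<Rightarrow> nat) \<Rightarrow> bool" where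
  "relaxed_coloring d V E k f \<longleftrightarrow>
     (\<forall>u\<in>V. f u \<in> {1..k}) \<and>
     (\<forall>u\<in>V. card {v\<in>V. E u v \<and> f v = f u} \<le> d)"

definition relaxed_chi :: "nat \<Rightarrow> 'a set \<Rightarrow> ('a \<Rightarrow> 'a \<Rightarrow> bool) \<Rightarrow> nat" where
  "relaxed_chi d V E = (LEAST k. \<exists>f. relaxed_coloring d V E k f)"

text \<open>Complete s-partite graph K(n_0,...,n_{s-1}): part i is V_i = {(i,k). k < n i},
vertices in different parts are adjacent, vertices in the same part are not.
(Parts are indexed 0..s-1.)\<close>
definition cmp_vertices :: "nat \<Rightarrow> (nat \<Rightarrow> nat) \<Rightarrow> (nat \<times> nat) set" where
  "cmp_vertices s n = {(i, k). i < s \<and> k < n i}"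

definition cmp_part :: "(nat \<Rightarrow> nat) \<Rightarrow> nat \<Rightarrow> (nat \<times> nat) set" where
  "cmp_part n j = {(j, k) | k. k < n j}"

definition cmp_adj :: "nat \<times> nat \<Rightarrow> nat \<times> nat \<Rightarrow> bool" where
  "cmp_adj u v \<longleftrightarrow> fst u \<noteq> fst v"

end

theory Submission
  imports Defs
begin

text \<open>Since \<open>V\<^sub>j\<close> is independent, giving it one fresh color extends any 3-relaxed coloring
  of \<open>G - V\<^sub>j\<close>. Conversely, let \<open>f\<close> be a 3-relaxed \<open>k\<close>-coloring of \<open>G\<close> and \<open>M\<close> the set of
  colors it uses on \<open>V\<^sub>j\<close>. A vertex outside \<open>V\<^sub>j\<close> with a color \<open>c \<in> M\<close> is adjacent to all
  of \<open>V\<^sub>j\<close>, so the class \<open>A\<^sub>c\<close> of \<open>c\<close> in \<open>G - V\<^sub>j\<close> has at most 3 vertices, and together with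
  the \<open>c\<close>-colored vertices of \<open>V\<^sub>j\<close> at most 6, or at most 4 when \<open>A\<^sub>c\<close> meets two parts.
  One color can be saved on \<open>G - V\<^sub>j\<close>: if some \<open>A\<^sub>c\<close> is empty, drop \<open>c\<close>; if two classes
  \<open>A\<^sub>a\<close>, \<open>A\<^sub>b\<close> each lie in a single part, merge them; otherwise, as \<open>|V\<^sub>j| \<ge> 6\<close>, counting
  leaves at most \<open>4 (|M| - 1)\<close> vertices of \<open>G - V\<^sub>j\<close> colored from \<open>M\<close>, and these can be spread
  over \<open>|M| - 1\<close> colors of \<open>M\<close>, four per color.\<close>

definition relaxed :: "nat \<Rightarrow> 'a set \<Rightarrow> ('a \<Rightarrow> 'a \<Rightarrow> bool) \<Rightarrow> ('a \<Rightarrow> 'b) \<Rightarrow> bool" where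
  "relaxed d W E h \<longleftrightarrow> (\<forall>u\<in>W. card {v\<in>W. E u v \<and> h v = h u} \<le> d)"

lemma relaxed_coloring_iff:
  "relaxed_coloring d V E k f \<longleftrightarrow> (\<forall>u\<in>V. f u \<in> {1..k}) \<and> relaxed d V E f"
  by (simp add: relaxed_coloring_def relaxed_def)

lemma relaxedD: "relaxed d W E h \<Longrightarrow> u \<in> W \<Longrightarrow> card {v\<in>W. E u v \<and> h v = h u} \<le> d"
  by (simp add: relaxed_def)

lemma relaxed_subset:
  assumes "relaxed d V E f" "finite V" "W \<subseteq> V"
  shows "relaxed d W E f"
  unfolding relaxed_def
proof
  fix u assume "u \<in> W"
  have "card {v\<in>W. E u v \<and> f v = f u} \<le> card {v\<in>V. E u v \<and> f v = f u}"
    using assms(2,3) by (intro card_mono) auto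
  also have "\<dots> \<le> d"
    using assms(1,3) \<open>u \<in> W\<close> by (auto intro: relaxedD)
  finally show "card {v\<in>W. E u v \<and> f v = f u} \<le> d" .
qed

lemma relaxed_chi_le: "relaxed_coloring d V E k f \<Longrightarrow> relaxed_chi d V E \<le> k"
  unfolding relaxed_chi_def by (blast intro: Least_le)

lemma relaxed_coloring_relaxed_chi:
  assumes "relaxed_coloring d V E k f"
  obtains g where "relaxed_coloring d V E (relaxed_chi d V E) g"
  using LeastI_ex[of "\<lambda>k. \<exists>f. relaxed_coloring d V E k f"] assms
  unfolding relaxed_chi_def by blast

lemma relaxed_coloring_extend_independent:
  assumes g: "relaxed_coloring d (V - P) E k g" and indep: "\<forall>u\<in>P. \<forall>v\<in>P. \<not> E u v"
  shows "relaxed_coloring d V E (k + 1) (\<lambda>v. if v \<in> P then k + 1 else g v)"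
    (is "relaxed_coloring d V E (k + 1) ?f")
proof -
  have g_range: "g v \<in> {1..k}" if "v \<in> V - P" for v
    using g that by (simp add: relaxed_coloring_def)
  have "card {v\<in>V. E u v \<and> ?f v = ?f u} \<le> d" if "u \<in> V" for u
  proof (cases "u \<in> P")
    case True
    then have no_conflict: "{v\<in>V. E u v \<and> ?f v = ?f u} = {}"
      using indep g_range by fastforce
    show ?thesis unfolding no_conflict by simp
  next
    case False
    then have same: "{v\<in>V. E u v \<and> ?f v = ?f u} = {v\<in>V - P. E u v \<and> g v = g u}"
      using g_range[of u] \<open>u \<in> V\<close> by auto
    show ?thesis unfolding same
      using g False \<open>u \<in> V\<close> by (simp add: relaxed_coloring_def)
  qed
  moreover have "?f u \<in> {1..k + 1}" if "u \<in> V" for u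
    using g_range that by force
  ultimately show ?thesis unfolding relaxed_coloring_def by blast
qed

lemma relaxed_chi_le_remove_independent:
  assumes "relaxed_coloring d (V - P) E k g" and "\<forall>u\<in>P. \<forall>v\<in>P. \<not> E u v"
  shows "relaxed_chi d V E \<le> relaxed_chi d (V - P) E + 1"
proof -
  obtain g' where "relaxed_coloring d (V - P) E (relaxed_chi d (V - P) E) g'"
    using relaxed_coloring_relaxed_chi[OF assms(1)] .
  then show ?thesis
    using relaxed_coloring_extend_independent[OF _ assms(2)] relaxed_chi_le by blast
qed

lemma relaxed_coloring_drop_color:
  assumes "c \<in> {1..k}" and "\<forall>u\<in>W. h u \<in> {1..k} - {c}" and "relaxed d W E h"
  shows "\<exists>g. relaxed_coloring d W E (k - 1) g"
proof -
  define r where "r x = (if c < x then x - 1 else x)" for x :: nat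
  have "inj_on r ({1..k} - {c})"
    by (auto simp: inj_on_def r_def split: if_splits)
  then have "r (h v) = r (h u) \<longleftrightarrow> h v = h u" if "u \<in> W" "v \<in> W" for u v
    using assms(2) that by (auto dest: inj_onD)
  then have "{v\<in>W. E u v \<and> r (h v) = r (h u)} = {v\<in>W. E u v \<and> h v = h u}" if "u \<in> W" for u
    using that by blast
  then have "relaxed d W E (r \<circ> h)"
    using assms(3) by (simp add: relaxed_def)
  moreover have "\<forall>u\<in>W. (r \<circ> h) u \<in> {1..k - 1}"
    using assms(1,2) by (fastforce simp: r_def)
  ultimately show ?thesis
    unfolding relaxed_coloring_iff by blast
qed

lemma exists_map_with_small_fibres:
  assumes "finite U" "finite C" "card U \<le> m * card C"
  obtains \<phi> where "\<forall>u\<in>U. \<phi> u \<in> C" and "\<forall>c. card {u\<in>U. \<phi> u = c} \<le> m"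
proof -
  have "card U \<le> card (C \<times> {..<m})"
    using assms(3) by (simp add: card_cartesian_product mult.commute)
  then obtain \<psi> where \<psi>: "\<psi> ` U \<subseteq> C \<times> {..<m}" "inj_on \<psi> U"
    using card_le_inj[of U "C \<times> {..<m}"] assms(1,2) by auto
  have "card {u\<in>U. fst (\<psi> u) = c} \<le> card ({c} \<times> {..<m})" for c
    using \<psi> by (intro card_inj_on_le[where f = \<psi>]) (auto intro: inj_on_subset)
  then have "card {u\<in>U. fst (\<psi> u) = c} \<le> m" for c
    by simp
  moreover have "\<forall>u\<in>U. fst (\<psi> u) \<in> C"
    using \<psi>(1) by auto
  ultimately show ?thesis
    using that[of "\<lambda>u. fst (\<psi> u)"] by blast
qed

lemma relaxed_recolor_classes:
  assumes finW: "finite W" and f: "relaxed d W E f" and irrefl: "\<And>u. \<not> E u u"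
    and CM: "C \<subseteq> M" and \<phi>_into: "\<forall>u\<in>W. f u \<in> M \<longrightarrow> \<phi> u \<in> C"
    and \<phi>_fibres: "\<forall>c. card {u\<in>W. f u \<in> M \<and> \<phi> u = c} \<le> Suc d"
  shows "relaxed d W E (\<lambda>v. if f v \<in> M then \<phi> v else f v)" (is "relaxed d W E ?h")
proof -
  define U where "U = {v\<in>W. f v \<in> M}"
  have h_U: "?h v \<in> M \<longleftrightarrow> v \<in> U" if "v \<in> W" for v
    using \<phi>_into CM that by (auto simp: U_def)
  have "card {v\<in>W. E u v \<and> ?h v = ?h u} \<le> d" if u: "u \<in> W" for u
  proof (cases "u \<in> U")
    case True
    have "{v\<in>W. E u v \<and> ?h v = ?h u} \<subseteq> {w\<in>U. \<phi> w = \<phi> u} - {u}"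
    proof
      fix v assume v: "v \<in> {v\<in>W. E u v \<and> ?h v = ?h u}"
      then have "v \<in> U"
        using h_U[OF u] h_U[of v] True by simp
      then show "v \<in> {w\<in>U. \<phi> w = \<phi> u} - {u}"
        using v True irrefl by (auto simp: U_def)
    qed
    then have "card {v\<in>W. E u v \<and> ?h v = ?h u} \<le> card ({w\<in>U. \<phi> w = \<phi> u} - {u})"
      using finW by (intro card_mono) (auto simp: U_def)
    also have "\<dots> = card {w\<in>U. \<phi> w = \<phi> u} - 1"
      using True by (simp add: card_Diff_singleton)
    finally show ?thesis
      using \<phi>_fibres[rule_format, of "\<phi> u"] by (simp add: U_def)
  next
    case False
    then have hu: "?h u = f u" "?h u \<notin> M"
      using h_U[OF u] u by (auto simp: U_def)
    have "{v\<in>W. E u v \<and> ?h v = ?h u} \<subseteq> {v\<in>W. E u v \<and> f v = f u}"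
    proof
      fix v assume v: "v \<in> {v\<in>W. E u v \<and> ?h v = ?h u}"
      then have "v \<notin> U"
        using h_U[of v] hu(2) by auto
      then show "v \<in> {v\<in>W. E u v \<and> f v = f u}"
        using v hu(1) by (auto simp: U_def)
    qed
    then have "card {v\<in>W. E u v \<and> ?h v = ?h u} \<le> card {v\<in>W. E u v \<and> f v = f u}"
      using finW by (intro card_mono) auto
    then show ?thesis
      using relaxedD[OF f u] by linarith
  qed
  then show ?thesis
    by (simp add: relaxed_def)
qed

lemma finite_cmp_vertices: "finite (cmp_vertices s n)"
proof -
  have "cmp_vertices s n = (SIGMA i:{..<s}. {..<n i})"
    by (auto simp: cmp_vertices_def)
  then show ?thesis by simp
qed

lemma relaxed_coloring_by_part:
  assumes "\<forall>v\<in>W. fst v < s"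
  shows "relaxed_coloring d W cmp_adj s (\<lambda>v. Suc (fst v))"
proof -
  have no_conflict: "{v\<in>W. cmp_adj u v \<and> Suc (fst v) = Suc (fst u)} = {}" for u
    by (auto simp: cmp_adj_def)
  have "relaxed d W cmp_adj (\<lambda>v. Suc (fst v))"
    unfolding relaxed_def no_conflict by simp
  then show ?thesis
    using assms by (simp add: relaxed_coloring_iff Suc_le_eq)
qed

lemma relaxed_coloring_cmp_exists:
  assumes "finite W"
  shows "\<exists>k f. relaxed_coloring d W cmp_adj k f"
proof -
  have "\<forall>v\<in>W. fst v < Suc (Max (fst ` W))"
    using assms by (simp add: le_imp_less_Suc)
  then show ?thesis
    using relaxed_coloring_by_part by blast
qed

text \<open>In the locale, \<open>part\<close> is \<open>V\<^sub>j\<close> and \<open>rest\<close> is \<open>G - V\<^sub>j\<close>; the parts of \<open>V\<close> are the fibres of \<open>fst\<close>.\<close>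
locale cmp_relaxed_3_coloring =
  fixes V :: "(nat \<times> nat) set" and j k :: nat and f :: "nat \<times> nat \<Rightarrow> nat"
  assumes finite_V: "finite V" and coloring: "relaxed_coloring 3 V cmp_adj k f"
begin

definition part :: "(nat \<times> nat) set" where
  "part = {v\<in>V. fst v = j}"

definition rest :: "(nat \<times> nat) set" where
  "rest = {v\<in>V. fst v \<noteq> j}"

definition part_colors :: "nat set" where
  "part_colors = f ` part"

definition rest_class :: "nat \<Rightarrow> (nat \<times> nat) set" where
  "rest_class c = {v\<in>rest. f v = c}"

definition part_class :: "nat \<Rightarrow> (nat \<times> nat) set" where
  "part_class c = {v\<in>part. f v = c}"

definition in_one_part :: "nat \<Rightarrow> bool" where
  "in_one_part c \<longleftrightarrow> (\<forall>x\<in>rest_class c. \<forall>y\<in>rest_class c. fst x = fst y)"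

lemma color_range: "u \<in> V \<Longrightarrow> f u \<in> {1..k}"
  using coloring by (simp add: relaxed_coloring_def)

lemma card_conflicts_le: "u \<in> V \<Longrightarrow> card {v\<in>V. cmp_adj u v \<and> f v = f u} \<le> 3"
  using coloring by (simp add: relaxed_coloring_def)

lemma finite_rest: "finite rest"
  using finite_V by (simp add: rest_def)

lemma finite_rest_class: "finite (rest_class c)"
  using finite_rest by (simp add: rest_class_def)

lemma finite_part_class: "finite (part_class c)"
  using finite_V by (simp add: part_class_def part_def)

lemma finite_part_colors: "finite part_colors"
  using finite_V by (simp add: part_colors_def part_def)

lemma part_colors_range: "part_colors \<subseteq> {1..k}"
  using color_range by (auto simp: part_colors_def part_def)

lemma relaxed_rest: "relaxed 3 rest cmp_adj f"
proof (rule relaxed_subset[OF _ finite_V])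
  show "relaxed 3 V cmp_adj f"
    using coloring by (simp add: relaxed_coloring_iff)
qed (auto simp: rest_def)

lemma card_rest_class_le:
  assumes "c \<in> part_colors"
  shows "card (rest_class c) \<le> 3"
proof -
  obtain w where w: "w \<in> V" "fst w = j" "f w = c"
    using assms by (auto simp: part_colors_def part_def)
  then have conflicts: "{v\<in>V. cmp_adj w v \<and> f v = f w} = rest_class c"
    by (auto simp: rest_def rest_class_def cmp_adj_def)
  show ?thesis
    using card_conflicts_le[OF w(1), unfolded conflicts] .
qed

lemma card_part_class_plus_other_parts:
  assumes u: "u \<in> rest_class c"
  shows "card (part_class c) + card {v\<in>rest_class c. fst v \<noteq> fst u} \<le> 3"
proof -
  have uV: "u \<in> V"
    using u by (simp add: rest_class_def rest_def)
  have "part_class c \<union> {v\<in>rest_class c. fst v \<noteq> fst u} \<subseteq> {v\<in>V. cmp_adj u v \<and> f v = f u}"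
    using u by (auto simp: part_class_def part_def rest_class_def rest_def cmp_adj_def)
  then have "card (part_class c \<union> {v\<in>rest_class c. fst v \<noteq> fst u})
      \<le> card {v\<in>V. cmp_adj u v \<and> f v = f u}"
    using finite_V by (intro card_mono) auto
  then have "card (part_class c \<union> {v\<in>rest_class c. fst v \<noteq> fst u}) \<le> 3"
    using card_conflicts_le[OF uV] by linarith
  moreover have "part_class c \<inter> {v\<in>rest_class c. fst v \<noteq> fst u} = {}"
    by (auto simp: part_class_def part_def rest_class_def rest_def)
  ultimately show ?thesis
    using finite_part_class finite_rest_class by (simp add: card_Un_disjoint)
qed

text \<open>Two members of the class lying in different parts see, between them, the whole class.\<close>
lemma card_classes_le_4:
  assumes "c \<in> part_colors" and "\<not> in_one_part c"
  shows "card (rest_class c) + card (part_class c) \<le> 4"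
proof -
  obtain u u' where uu: "u \<in> rest_class c" "u' \<in> rest_class c" "fst u \<noteq> fst u'"
    using assms(2) by (auto simp: in_one_part_def)
  have "rest_class c \<subseteq> {v\<in>rest_class c. fst v \<noteq> fst u} \<union> {v\<in>rest_class c. fst v \<noteq> fst u'}"
    using uu(3) by auto
  then have "card (rest_class c)
      \<le> card ({v\<in>rest_class c. fst v \<noteq> fst u} \<union> {v\<in>rest_class c. fst v \<noteq> fst u'})"
    using finite_rest_class by (intro card_mono) auto
  also have "\<dots> \<le> card {v\<in>rest_class c. fst v \<noteq> fst u} + card {v\<in>rest_class c. fst v \<noteq> fst u'}"
    by (rule card_Un_le)
  finally show ?thesis
    using card_part_class_plus_other_parts[OF uu(1)] card_part_class_plus_other_parts[OF uu(2)]
      card_rest_class_le[OF assms(1)] by linarith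
qed

lemma card_classes_le_6:
  assumes "c \<in> part_colors" and "rest_class c \<noteq> {}"
  shows "card (rest_class c) + card (part_class c) \<le> 6"
proof -
  obtain u where "u \<in> rest_class c"
    using assms(2) by blast
  then show ?thesis
    using card_part_class_plus_other_parts[of u c] card_rest_class_le[OF assms(1)] by linarith
qed

lemma recolor_drop_unused:
  assumes "c \<in> part_colors" and "rest_class c = {}"
  shows "\<exists>g. relaxed_coloring 3 rest cmp_adj (k - 1) g"
proof (rule relaxed_coloring_drop_color[OF _ _ relaxed_rest])
  show "c \<in> {1..k}"
    using assms(1) part_colors_range by blast
  show "\<forall>u\<in>rest. f u \<in> {1..k} - {c}"
    using assms(2) color_range by (auto simp: rest_class_def rest_def)
qed

lemma recolor_merge:
  assumes a: "a \<in> part_colors" "in_one_part a" and b: "b \<in> part_colors" "in_one_part b"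
    and "a \<noteq> b"
  shows "\<exists>g. relaxed_coloring 3 rest cmp_adj (k - 1) g"
proof -
  define h where "h v = (if f v = b then a else f v)" for v
  have "card {v\<in>rest. cmp_adj u v \<and> h v = h u} \<le> 3" if u: "u \<in> rest" for u
  proof (cases "f u \<in> {a, b}")
    case True
    then obtain y where y: "y \<in> {a, b}" "y \<noteq> f u"
      using \<open>a \<noteq> b\<close> by blast
    have "{v\<in>rest. cmp_adj u v \<and> h v = h u} \<subseteq> rest_class y"
    proof
      fix v assume v: "v \<in> {v\<in>rest. cmp_adj u v \<and> h v = h u}"
      then have "f v \<in> {a, b}"
        using True by (auto simp: h_def split: if_splits)
      moreover have "f v \<noteq> f u"
      proof
        assume "f v = f u"
        then have "u \<in> rest_class (f u)" "v \<in> rest_class (f u)"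
          using u v by (auto simp: rest_class_def)
        moreover have "in_one_part (f u)"
          using True a(2) b(2) by blast
        ultimately have "fst v = fst u"
          unfolding in_one_part_def by blast
        then show False
          using v by (simp add: cmp_adj_def)
      qed
      ultimately show "v \<in> rest_class y"
        using v y True by (auto simp: rest_class_def)
    qed
    then have "card {v\<in>rest. cmp_adj u v \<and> h v = h u} \<le> card (rest_class y)"
      using finite_rest_class by (rule card_mono[rotated])
    moreover have "y \<in> part_colors"
      using a(1) b(1) y(1) by blast
    ultimately show ?thesis
      using card_rest_class_le by (meson le_trans)
  next
    case False
    then have "{v\<in>rest. cmp_adj u v \<and> h v = h u} \<subseteq> {v\<in>rest. cmp_adj u v \<and> f v = f u}"
      using \<open>a \<noteq> b\<close> by (auto simp: h_def)
    then have "card {v\<in>rest. cmp_adj u v \<and> h v = h u} \<le> card {v\<in>rest. cmp_adj u v \<and> f v = f u}"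
      using finite_rest by (intro card_mono) auto
    then show ?thesis
      using relaxedD[OF relaxed_rest u] by linarith
  qed
  then have "relaxed 3 rest cmp_adj h"
    by (simp add: relaxed_def)
  moreover have "b \<in> {1..k}" and "\<forall>u\<in>rest. h u \<in> {1..k} - {b}"
    using a(1) b(1) \<open>a \<noteq> b\<close> part_colors_range color_range
    by (auto simp: h_def rest_def)
  ultimately show ?thesis
    using relaxed_coloring_drop_color by blast
qed

lemma card_recolored_le:
  assumes c0: "c0 \<in> part_colors" and nonempty: "\<forall>c\<in>part_colors. rest_class c \<noteq> {}"
    and spread: "\<forall>c\<in>part_colors - {c0}. \<not> in_one_part c" and large: "6 \<le> card part"
  shows "card {v\<in>rest. f v \<in> part_colors} \<le> 4 * card (part_colors - {c0})"
proof -
  have "{v\<in>rest. f v \<in> part_colors} = (\<Union>c\<in>part_colors. rest_class c)"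
    by (auto simp: rest_class_def)
  also have "card \<dots> = (\<Sum>c\<in>part_colors. card (rest_class c))"
    using finite_part_colors finite_rest_class by (intro card_UN_disjoint) (auto simp: rest_class_def)
  finally have card_rest:
    "card {v\<in>rest. f v \<in> part_colors} = (\<Sum>c\<in>part_colors. card (rest_class c))" .
  have "part = (\<Union>c\<in>part_colors. part_class c)"
    by (auto simp: part_colors_def part_class_def)
  also have "card \<dots> = (\<Sum>c\<in>part_colors. card (part_class c))"
    using finite_part_colors finite_part_class by (intro card_UN_disjoint) (auto simp: part_class_def)
  finally have card_part: "card part = (\<Sum>c\<in>part_colors. card (part_class c))" .
  have "(\<Sum>c\<in>part_colors. card (rest_class c) + card (part_class c))
      = (card (rest_class c0) + card (part_class c0))
        + (\<Sum>c\<in>part_colors - {c0}. card (rest_class c) + card (part_class c))"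
    using finite_part_colors c0 by (simp add: sum.remove)
  also have "\<dots> \<le> 6 + (\<Sum>c\<in>part_colors - {c0}. 4)"
    using card_classes_le_6[OF c0] nonempty c0 card_classes_le_4 spread
    by (intro add_mono sum_mono) auto
  finally show ?thesis
    using card_rest card_part large by (simp add: sum.distrib)
qed

lemma recolor_redistribute:
  assumes c0: "c0 \<in> part_colors" and "\<forall>c\<in>part_colors. rest_class c \<noteq> {}"
    and "\<forall>c\<in>part_colors - {c0}. \<not> in_one_part c" and "6 \<le> card part"
  shows "\<exists>g. relaxed_coloring 3 rest cmp_adj (k - 1) g"
proof -
  have card_recolored: "card {v\<in>rest. f v \<in> part_colors} \<le> Suc 3 * card (part_colors - {c0})"
    using card_recolored_le[OF assms] by simp
  obtain \<phi> where \<phi>: "\<forall>u\<in>{v\<in>rest. f v \<in> part_colors}. \<phi> u \<in> part_colors - {c0}"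
    "\<forall>c. card {u\<in>{v\<in>rest. f v \<in> part_colors}. \<phi> u = c} \<le> Suc 3"
    using exists_map_with_small_fibres[OF _ _ card_recolored] finite_rest finite_part_colors
    by auto
  have irrefl: "\<And>u. \<not> cmp_adj u u"
    by (simp add: cmp_adj_def)
  let ?h = "\<lambda>v. if f v \<in> part_colors then \<phi> v else f v"
  have h_relaxed: "relaxed 3 rest cmp_adj ?h"
    using \<phi> by (intro relaxed_recolor_classes[OF finite_rest relaxed_rest irrefl Diff_subset]) auto
  have h_range: "\<forall>u\<in>rest. ?h u \<in> {1..k} - {c0}"
  proof (intro ballI)
    fix u assume u: "u \<in> rest"
    show "?h u \<in> {1..k} - {c0}"
    proof (cases "f u \<in> part_colors")
      case True
      then have "\<phi> u \<in> part_colors - {c0}"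
        using \<phi>(1) u by blast
      then show ?thesis
        using True part_colors_range by auto
    next
      case False
      then show ?thesis
        using c0 color_range[of u] u by (auto simp: rest_def)
    qed
  qed
  have "c0 \<in> {1..k}"
    using c0 part_colors_range by blast
  then show ?thesis
    using h_range h_relaxed by (rule relaxed_coloring_drop_color)
qed

lemma rest_recolorable:
  assumes large: "6 \<le> card part"
  shows "\<exists>g. relaxed_coloring 3 rest cmp_adj (k - 1) g"
proof -
  have "part \<noteq> {}"
    using large by auto
  then obtain c0 where c0: "c0 \<in> part_colors"
    "in_one_part c0 \<or> (\<forall>c\<in>part_colors. \<not> in_one_part c)"
    unfolding part_colors_def by blast
  consider (unused) c where "c \<in> part_colors" "rest_class c = {}"
    | (merge) a b where "a \<in> part_colors" "in_one_part a" "b \<in> part_colors" "in_one_part b"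
        "a \<noteq> b"
    | (spread) "\<forall>c\<in>part_colors. rest_class c \<noteq> {}"
        "\<forall>c\<in>part_colors - {c0}. \<not> in_one_part c"
    using c0 by blast
  then show ?thesis
  proof cases
    case unused
    then show ?thesis by (rule recolor_drop_unused)
  next
    case merge
    then show ?thesis by (rule recolor_merge)
  next
    case spread
    then show ?thesis by (rule recolor_redistribute[OF c0(1) _ _ large])
  qed
qed

end

lemma relaxed_chi_cmp_remove_part:
  assumes "finite V" and "6 \<le> card {v\<in>V. fst v = j}"
  shows "relaxed_chi 3 V cmp_adj = relaxed_chi 3 {v\<in>V. fst v \<noteq> j} cmp_adj + 1"
proof -
  let ?P = "{v\<in>V. fst v = j}" and ?R = "{v\<in>V. fst v \<noteq> j}"
  have rest: "V - ?P = ?R"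
    by auto
  have "finite ?R"
    using assms(1) by simp
  then obtain k g where "relaxed_coloring 3 ?R cmp_adj k g"
    using relaxed_coloring_cmp_exists by blast
  then have upper: "relaxed_chi 3 V cmp_adj \<le> relaxed_chi 3 ?R cmp_adj + 1"
    using relaxed_chi_le_remove_independent[of 3 V ?P] by (simp add: rest cmp_adj_def)
  obtain k f where "relaxed_coloring 3 V cmp_adj k f"
    using relaxed_coloring_cmp_exists[OF assms(1)] by blast
  then obtain f where f: "relaxed_coloring 3 V cmp_adj (relaxed_chi 3 V cmp_adj) f"
    by (rule relaxed_coloring_relaxed_chi)
  interpret cmp_relaxed_3_coloring V j "relaxed_chi 3 V cmp_adj" f
    using assms(1) f by unfold_locales
  obtain g where "relaxed_coloring 3 ?R cmp_adj (relaxed_chi 3 V cmp_adj - 1) g"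
    using rest_recolorable assms(2) by (auto simp: part_def rest_def)
  then have lower: "relaxed_chi 3 ?R cmp_adj \<le> relaxed_chi 3 V cmp_adj - 1"
    by (rule relaxed_chi_le)
  have "?P \<noteq> {}"
    using assms(2) by (intro notI) simp
  then obtain v where "v \<in> V"
    by blast
  then have "1 \<le> relaxed_chi 3 V cmp_adj"
    using color_range by fastforce
  then show ?thesis
    using upper lower by linarith
qed

lemma card_cmp_part: "card (cmp_part n j) = n j"
proof -
  have "cmp_part n j = Pair j ` {..<n j}"
    by (auto simp: cmp_part_def)
  then show ?thesis
    by (simp add: card_image inj_on_def)
qed

theorem corollary5p2:
  fixes s :: nat and n :: "nat \<Rightarrow> nat" and j :: nat
  assumes "s \<ge> 2"
    and "\<forall>i<s. n i \<ge> 1"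
    and "j < s"
    and "n j \<ge> 6"
  shows "relaxed_chi 3 (cmp_vertices s n) cmp_adj
         = relaxed_chi 3 (cmp_vertices s n - cmp_part n j) cmp_adj + 1"
proof -
  have part: "{v\<in>cmp_vertices s n. fst v = j} = cmp_part n j"
    unfolding cmp_vertices_def cmp_part_def using \<open>j < s\<close> by auto
  have rest: "{v\<in>cmp_vertices s n. fst v \<noteq> j} = cmp_vertices s n - cmp_part n j"
    by (auto simp: cmp_vertices_def cmp_part_def)
  show ?thesis
    using relaxed_chi_cmp_remove_part[OF finite_cmp_vertices[of s n], where j = j] \<open>n j \<ge> 6\<close>
    unfolding part rest card_cmp_part by simp
qed

end
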